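(* For every integer $n\ge 5$, the independence polynomial $I(T_{5,n};t)$ is unimodal and its mode belongs to $\{\lambda_{n+2},\lambda_{n+2}+1,\lambda_{n+2}+2\}$, where $\lambda_{k}$ denotes the mode of the independence polynomial $I(P_k;t)$ of the path $P_k$ on $k$ vertices.
   Context: For a simple graph $G$, the independence polynomial is $I(G;t)=\sum_{k\ge 0}s_k(G)t^k$, where $s_k(G)$ is the number of independent sets (sets of pairwise non-adjacent vertices) of size $k$ in $G$. $P_k$ is the path on $k$ vertices; its independence polynomial is known to be unimodal. For integers $m\ge 3$, $n\ge 1$, the tadpole graph $T_{m,n}$ is the simple graph with vertex set $\{x_1,\dots,x_m,y_1,\dots,y_n\}$ and edges $\{x_i,x_{i+1}\}$ for $1\le i\le m-1$, $\{x_m,x_1\}$, $\{y_j,y_{j+1}\}$ for $1\le j\le n-1$, and $\{x_m,y_1\}$. A polynomial $\sum a_kt^k$ with nonnegative coefficients is unimodal if $a_0\le\cdots\le a_m\ge a_{m+1}\ge\cdots$ for some $m$; with $a_{-1}=0$, its mode is the unique $i$ with $a_{i-1}<a_i\ge a_{i+1}\ge a_{i+2}\ge\cdots$. *)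

theory Defs
  imports Main "HOL-Computational_Algebra.Polynomial"
begin

text \<open>A simple graph is given by a finite vertex set V and a symmetric,
irreflexive adjacency predicate E (only its restriction to V matters).\<close>

definition independent_set :: "'a set \<Rightarrow> ('a \<Rightarrow> 'a \<Rightarrow> bool) \<Rightarrow> 'a set \<Rightarrow> bool" where
  "independent_set V E S \<longleftrightarrow> S \<subseteq> V \<and> (\<forall>x\<in>S. \<forall>y\<in>S. \<not> E x y)"

definition indep_count :: "'a set \<Rightarrow> ('a \<Rightarrow> 'a \<Rightarrow> bool) \<Rightarrow> nat \<Rightarrow> nat" where
  "indep_count V E k = card {S. independent_set V E S \<and> card S = k}"

definition indep_poly :: "'a set \<Rightarrow> ('a \<Rightarrow> 'a \<Rightarrow> bool) \<Rightarrow> nat poly" where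
  "indep_poly V E = (\<Sum>k\<le>card V. monom (indep_count V E k) k)"

definition unimodal :: "nat poly \<Rightarrow> bool" where
  "unimodal p \<longleftrightarrow> (\<exists>m. (\<forall>i<m. coeff p i \<le> coeff p (Suc i)) \<and>
                          (\<forall>i\<ge>m. coeff p (Suc i) \<le> coeff p i))"

definition is_mode :: "nat poly \<Rightarrow> nat \<Rightarrow> bool" where
  "is_mode p i \<longleftrightarrow> (if i = 0 then 0 < coeff p 0 else coeff p (i - 1) < coeff p i) \<and>
                     (\<forall>j\<ge>i. coeff p (Suc j) \<le> coeff p j)"

definition mode :: "nat poly \<Rightarrow> nat" where
  "mode p = (THE i. is_mode p i)"

definition path_V :: "nat \<Rightarrow> nat set" where
  "path_V k = {1..k}"

definition path_E :: "nat \<Rightarrow> nat \<Rightarrow> bool" where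
  "path_E i j \<longleftrightarrow> j = Suc i \<or> i = Suc j"

text \<open>Tadpole T_{m,n}: x_i = Inl i (1 <= i <= m), y_j = Inr j (1 <= j <= n).\<close>
definition tadpole_V :: "nat \<Rightarrow> nat \<Rightarrow> (nat + nat) set" where
  "tadpole_V m n = Inl ` {1..m} \<union> Inr ` {1..n}"

fun tadpole_arc :: "nat \<Rightarrow> nat \<Rightarrow> (nat + nat) \<Rightarrow> (nat + nat) \<Rightarrow> bool" where
  "tadpole_arc m n (Inl i) (Inl j) \<longleftrightarrow>
     (1 \<le> i \<and> i \<le> m - 1 \<and> j = Suc i) \<or> (i = m \<and> j = 1)"
| "tadpole_arc m n (Inr i) (Inr j) \<longleftrightarrow> 1 \<le> i \<and> i \<le> n - 1 \<and> j = Suc i"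
| "tadpole_arc m n (Inl i) (Inr j) \<longleftrightarrow> i = m \<and> j = 1"
| "tadpole_arc m n (Inr i) (Inl j) \<longleftrightarrow> False"

definition tadpole_E :: "nat \<Rightarrow> nat \<Rightarrow> (nat + nat) \<Rightarrow> (nat + nat) \<Rightarrow> bool" where
  "tadpole_E m n u v \<longleftrightarrow> tadpole_arc m n u v \<or> tadpole_arc m n v u"

end

theory Submission
  imports Defs
begin

text \<open>Deleting the last vertex of the tail gives I(T_{5,n+2}) = I(T_{5,n+1}) + t I(T_{5,n}), the
recurrence of the paths, so I(T_{5,n}) = I(P_{n+4}) + (t + 2t^2) I(P_n). The coefficients of
I(P_k) are binomial(k+1-j, j), and whether they descend at j is decided by the sign of a quadratic
form in k and j. This yields \<lambda>_n \<le> \<lambda>_{n+2} \<le> \<lambda>_n + 1 and \<lambda>_n + 1 \<le> \<lambda>_{n+4}.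
Hence the coefficients of I(T_{5,n}) rise strictly up to index \<lambda>_n + 1 and descend from
\<lambda>_n + 2 on, so the mode is \<lambda>_n + 1 or \<lambda>_n + 2, while \<lambda>_{n+2} is \<lambda>_n or \<lambda>_n + 1.\<close>

section \<open>Independence polynomials\<close>

lemma finite_independent_sets: "finite V \<Longrightarrow> finite {S. independent_set V E S \<and> card S = k}"
  by (rule finite_subset[of _ "Pow V"]) (auto simp: independent_set_def)

lemma indep_count_eq_0: "finite V \<Longrightarrow> card V < k \<Longrightarrow> indep_count V E k = 0"
  unfolding indep_count_def independent_set_def using card_mono by fastforce

lemma indep_count_0: "finite V \<Longrightarrow> indep_count V E 0 = 1"
proof -
  assume "finite V"
  then have "{S. independent_set V E S \<and> card S = 0} = {{}}"
    by (auto simp: independent_set_def) (metis card_0_eq empty_iff finite_subset)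
  then show ?thesis by (simp add: indep_count_def)
qed

lemma coeff_indep_poly: "finite V \<Longrightarrow> coeff (indep_poly V E) k = indep_count V E k"
  by (auto simp: indep_poly_def coeff_sum indep_count_eq_0 not_le)

lemma indep_poly_eqI:
  assumes "finite V" "degree q \<le> card V" "\<And>k. k \<le> card V \<Longrightarrow> indep_count V E k = coeff q k"
  shows "indep_poly V E = q"
  using assms by (intro poly_eqI) (metis coeff_eq_0 coeff_indep_poly indep_count_eq_0 le_trans not_le)

lemma indep_poly_cong:
  assumes "\<And>x y. x \<in> V \<Longrightarrow> y \<in> V \<Longrightarrow> E x y = E' x y"
  shows "indep_poly V E = indep_poly V E'"
proof -
  have "independent_set V E = independent_set V E'"
    using assms by (fastforce simp: independent_set_def)
  then show ?thesis by (simp add: indep_poly_def indep_count_def)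
qed

lemma indep_count_Suc_delete:
  assumes "finite V" "v \<in> V" "\<not> E v v"
  shows "indep_count V E (Suc j) = indep_count (V - {v}) E (Suc j)
           + indep_count (V - {v} - {u. E v u \<or> E u v}) E j"
proof -
  define N where "N = {u. E v u \<or> E u v}"
  let ?sets = "\<lambda>W k. {S. independent_set W E S \<and> card S = k}"
  have split: "?sets V (Suc j) = ?sets (V - {v}) (Suc j) \<union> insert v ` ?sets (V - {v} - N) j"
  proof (intro equalityI subsetI)
    fix S assume S: "S \<in> ?sets V (Suc j)"
    show "S \<in> ?sets (V - {v}) (Suc j) \<union> insert v ` ?sets (V - {v} - N) j"
    proof (cases "v \<in> S")
      case True
      have "finite S" using S assms(1) by (auto simp: independent_set_def intro: finite_subset)
      then have "S - {v} \<in> ?sets (V - {v} - N) j" "S = insert v (S - {v})"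
        using S True by (auto simp: independent_set_def N_def)
      then show ?thesis by blast
    qed (use S in \<open>auto simp: independent_set_def\<close>)
  next
    fix S assume "S \<in> ?sets (V - {v}) (Suc j) \<union> insert v ` ?sets (V - {v} - N) j"
    then show "S \<in> ?sets V (Suc j)"
    proof
      assume "S \<in> insert v ` ?sets (V - {v} - N) j"
      then obtain T where T: "independent_set (V - {v} - N) E T" "card T = j" "S = insert v T"
        by blast
      then have "finite T" "v \<notin> T"
        using assms(1) by (auto simp: independent_set_def intro: finite_subset)
      then show ?thesis
        using T assms by (auto simp: independent_set_def N_def)
    qed (auto simp: independent_set_def)
  qed
  have "inj_on (insert v) (?sets (V - {v} - N) j)"
    by (rule inj_onI) (auto simp: independent_set_def)
  moreover have "?sets (V - {v}) (Suc j) \<inter> insert v ` ?sets (V - {v} - N) j = {}"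
    by (auto simp: independent_set_def)
  ultimately show ?thesis
    unfolding indep_count_def split N_def[symmetric] using assms(1)
    by (simp add: card_Un_disjoint card_image finite_independent_sets)
qed

lemma indep_poly_delete:
  assumes "finite V" "v \<in> V" "\<not> E v v"
  shows "indep_poly V E =
           indep_poly (V - {v}) E + [:0, 1:] * indep_poly (V - {v} - {u. E v u \<or> E u v}) E"
    (is "_ = ?rhs")
proof (rule poly_eqI)
  show "coeff (indep_poly V E) k = coeff ?rhs k" for k
    using assms by (cases k) (simp_all add: coeff_indep_poly indep_count_0 indep_count_Suc_delete)
qed

lemma indep_count_set_list:
  assumes "distinct xs"
  shows "indep_count (set xs) E k =
           length (filter (\<lambda>ys. independent_set (set xs) E (set ys) \<and> card (set ys) = k) (subseqs xs))"
proof -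
  let ?P = "\<lambda>S. independent_set (set xs) E S \<and> card S = k"
  define L where "L = filter ?P (map set (subseqs xs))"
  have "{S. ?P S} = set L"
    using subseqs_powset[of xs] by (auto simp: independent_set_def L_def)
  moreover have "distinct L"
    using distinct_set_subseqs[OF assms] by (simp add: L_def)
  ultimately have "indep_count (set xs) E k = length L"
    by (simp add: indep_count_def distinct_card)
  then show ?thesis by (simp add: L_def filter_map comp_def)
qed

lemma indep_poly_set_list_eqI:
  assumes "distinct xs" "degree q \<le> length xs"
    and "list_all (\<lambda>k. length (filter (\<lambda>ys. independent_set (set xs) E (set ys) \<and> card (set ys) = k)
                       (subseqs xs)) = coeff q k) [0..<Suc (length xs)]"
  shows "indep_poly (set xs) E = q"
  using assms by (intro indep_poly_eqI)
    (auto simp: distinct_card indep_count_set_list list_all_iff simp del: upt_Suc)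

section \<open>Modes\<close>

lemma is_mode_unique:
  assumes "is_mode p i" "is_mode p i'"
  shows "i = i'"
proof (rule ccontr)
  have no_later_mode: False if "is_mode p a" "is_mode p b" "a < b" for a b
  proof -
    have "coeff p (b - 1) < coeff p b" using that by (simp add: is_mode_def)
    moreover have "a \<le> b - 1" "Suc (b - 1) = b"
      using \<open>a < b\<close> by auto
    then have "coeff p b \<le> coeff p (b - 1)"
      using \<open>is_mode p a\<close> unfolding is_mode_def by metis
    ultimately show False by simp
  qed
  assume "i \<noteq> i'"
  then show False using assms no_later_mode by (metis linorder_neqE_nat)
qed

lemma mode_eqI: "is_mode p i \<Longrightarrow> mode p = i"
  unfolding mode_def using is_mode_unique by blast

lemma unimodal_mode_eqI:
  assumes "0 < coeff p m"
    and "\<And>i. i < m \<Longrightarrow> coeff p i < coeff p (Suc i)"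
    and "\<And>i. m \<le> i \<Longrightarrow> coeff p (Suc i) \<le> coeff p i"
  shows "unimodal p \<and> mode p = m"
proof
  show "unimodal p"
    unfolding unimodal_def using assms(2,3) less_imp_le by meson
  have "is_mode p m"
    using assms by (cases m) (auto simp: is_mode_def)
  then show "mode p = m" by (rule mode_eqI)
qed

definition descends_at :: "nat poly \<Rightarrow> nat \<Rightarrow> bool" where
  "descends_at p j \<longleftrightarrow> coeff p (Suc j) \<le> coeff p j"

lemma descends_at_iff_mode_le:
  assumes "0 < coeff p 0" and descends_Suc: "\<And>j. descends_at p j \<Longrightarrow> descends_at p (Suc j)"
  shows "descends_at p j \<longleftrightarrow> mode p \<le> j"
proof -
  have descends_later: "descends_at p j" if "descends_at p i" "i \<le> j" for i j
    using that(2,1) by (induction j rule: dec_induct) (auto intro: descends_Suc)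
  define m where "m = (LEAST j. descends_at p j)"
  have "descends_at p (degree p)"
    by (simp add: descends_at_def coeff_eq_0)
  then have "descends_at p m"
    unfolding m_def by (rule LeastI)
  have rising: "coeff p i < coeff p (Suc i)" if "i < m" for i
    using not_less_Least[OF that[unfolded m_def]] by (simp add: descends_at_def)
  have "0 < coeff p m"
    using assms(1) rising[of "m - 1"] by (cases m) auto
  have "unimodal p \<and> mode p = m"
  proof (rule unimodal_mode_eqI[OF \<open>0 < coeff p m\<close> rising])
    show "coeff p (Suc i) \<le> coeff p i" if "m \<le> i" for i
      using descends_later[OF \<open>descends_at p m\<close> that] by (simp add: descends_at_def)
  qed
  then show ?thesis
    using descends_later[OF \<open>descends_at p m\<close>, of j] Least_le[of "descends_at p" j]
    unfolding m_def by auto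
qed

lemma unimodal_mode_within_gap:
  assumes rising: "\<And>i. i \<le> L \<Longrightarrow> coeff p i < coeff p (Suc i)"
    and falling: "\<And>i. L + 2 \<le> i \<Longrightarrow> descends_at p i"
  shows "unimodal p \<and> mode p \<in> {L + 1, L + 2}"
proof (cases "descends_at p (L + 1)")
  case True
  have "unimodal p \<and> mode p = L + 1"
  proof (rule unimodal_mode_eqI)
    show "0 < coeff p (L + 1)"
      using rising[of L] by simp
    show "coeff p i < coeff p (Suc i)" if "i < L + 1" for i
      using rising that by simp
    show "coeff p (Suc i) \<le> coeff p i" if "L + 1 \<le> i" for i
      using True falling[of i] that by (cases "i = L + 1") (auto simp: descends_at_def)
  qed
  then show ?thesis by simp
next
  case False
  have "unimodal p \<and> mode p = L + 2"
  proof (rule unimodal_mode_eqI)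
    show "0 < coeff p (L + 2)"
      using False by (simp add: descends_at_def)
    show "coeff p i < coeff p (Suc i)" if "i < L + 2" for i
      using False rising[of i] that by (cases "i = L + 1") (auto simp: descends_at_def)
    show "coeff p (Suc i) \<le> coeff p i" if "L + 2 \<le> i" for i
      using falling that by (simp add: descends_at_def)
  qed
  then show ?thesis by simp
qed

section \<open>Paths\<close>

abbreviation path_poly :: "nat \<Rightarrow> nat poly" where
  "path_poly k \<equiv> indep_poly (path_V k) path_E"

lemma path_poly_0: "path_poly 0 = 1"
  by (simp add: indep_poly_def path_V_def indep_count_0 del: One_nat_def)

lemma path_poly_Suc: "path_poly (Suc k) = path_poly k + [:0, 1:] * path_poly (k - 1)"
proof -
  let ?N = "{u. path_E (Suc k) u \<or> path_E u (Suc k)}"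
  have "path_poly (Suc k) = indep_poly (path_V (Suc k) - {Suc k}) path_E
          + [:0, 1:] * indep_poly (path_V (Suc k) - {Suc k} - ?N) path_E"
    by (rule indep_poly_delete) (auto simp: path_V_def path_E_def)
  moreover have "path_V (Suc k) - {Suc k} = path_V k"
    by (auto simp: path_V_def)
  moreover have "path_V (Suc k) - {Suc k} - ?N = path_V (k - 1)"
    by (auto simp: path_V_def path_E_def)
  ultimately show ?thesis by simp
qed

lemma coeff_path_poly: "coeff (path_poly k) j = (k + 1 - j) choose j"
proof (induction k arbitrary: j rule: less_induct)
  case (less k)
  show ?case
  proof (cases j)
    case 0
    then show ?thesis by (simp add: coeff_indep_poly indep_count_0 path_V_def)
  next
    case (Suc i)
    show ?thesis
    proof (cases k)
      case 0
      then show ?thesis using Suc by (simp add: path_poly_0)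
    next
      case (Suc k')
      then have "coeff (path_poly k) j = ((k' + 1 - j) choose j) + ((k' - 1 + 1 - i) choose i)"
        using less \<open>j = Suc i\<close> by (simp add: path_poly_Suc)
      also have "\<dots> = (k + 1 - j) choose j"
        using \<open>k = Suc k'\<close> \<open>j = Suc i\<close> by (cases "i \<le> k'"; cases k') (auto simp: Suc_diff_le)
      finally show ?thesis .
    qed
  qed
qed

lemma binomial_Suc_ratio:
  "(m choose Suc j) * (Suc j * Suc m) = (Suc m choose j) * ((Suc m - j) * (m - j))"
proof -
  have "(m choose Suc j) * (Suc j * Suc m) = (Suc j * (m choose Suc j)) * Suc m"
    by (simp only: ac_simps)
  also have "\<dots> = ((m - j) * (m choose j)) * Suc m"
    by (simp only: binomial_absorption binomial_absorb_comp)
  also have "\<dots> = (m - j) * ((Suc m - j) * (Suc m choose j))"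
    using binomial_absorb_comp[of "Suc m" j] by (simp add: algebra_simps)
  finally show ?thesis by (simp only: ac_simps)
qed

text \<open>(k + 1 - 2j)(k - 2j) - (j + 1)(k + 1 - j): by the binomial ratio above, the coefficients of
I(P_k) descend at j \<le> k/2 iff this is not positive.\<close>
definition descent_form :: "int \<Rightarrow> int \<Rightarrow> int" where
  "descent_form k j = k\<^sup>2 - 5 * k * j + 5 * j\<^sup>2 - 2 * j - 1"

lemma descends_at_path_poly_iff:
  assumes "2 * j \<le> k"
  shows "descends_at (path_poly k) j \<longleftrightarrow> descent_form (int k) (int j) \<le> 0"
proof -
  define m where "m = k - j"
  have k: "k = m + j" and "j \<le> m"
    using assms by (simp_all add: m_def)
  have pos: "0 < (Suc m choose j)" "0 < Suc j * Suc m"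
    using \<open>j \<le> m\<close> by simp_all
  have "descends_at (path_poly k) j \<longleftrightarrow> (m choose Suc j) \<le> (Suc m choose j)"
    by (simp add: descends_at_def coeff_path_poly k)
  also have "\<dots> \<longleftrightarrow> (m choose Suc j) * (Suc j * Suc m) \<le> (Suc m choose j) * (Suc j * Suc m)"
    using pos(2) by (simp only: mult_le_cancel2) simp
  also have "\<dots> \<longleftrightarrow> (Suc m - j) * (m - j) \<le> Suc j * Suc m"
    using pos(1) by (simp only: binomial_Suc_ratio mult_le_cancel1) simp
  also have "\<dots> \<longleftrightarrow> int (Suc m - j) * int (m - j) \<le> int (Suc j) * int (Suc m)"
    by (simp only: of_nat_mult[symmetric] of_nat_le_iff)
  also have "\<dots> \<longleftrightarrow> descent_form (int k) (int j) \<le> 0"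
    using \<open>j \<le> m\<close> by (simp add: k descent_form_def of_nat_diff power2_eq_square algebra_simps)
  finally show ?thesis .
qed

lemma descends_at_path_poly_if_less: "k < 2 * j \<Longrightarrow> descends_at (path_poly k) j"
  by (simp add: descends_at_def coeff_path_poly binomial_eq_0)

lemma descends_at_path_poly_middle:
  assumes "2 * j \<le> k" "3 * k \<le> 10 * j"
  shows "descends_at (path_poly k) j"
proof -
  define a b where "a = int k - 2 * int j" and "b = int k - 3 * int j"
  have form: "descent_form (int k) (int j) = a * b - (int j + 1)\<^sup>2"
    by (simp add: descent_form_def a_def b_def power2_eq_square algebra_simps)
  have "0 \<le> a" "3 * b \<le> int j" "3 * a \<le> 4 * int j"
    using assms by (simp_all add: a_def b_def)
  have square: "(int j + 1)\<^sup>2 = int j * int j + 2 * int j + 1"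
    by algebra
  have "0 \<le> int j * int j"
    by simp
  have "a * b < (int j + 1)\<^sup>2"
  proof (cases "b \<le> 0")
    case True
    then have "a * b \<le> 0"
      using \<open>0 \<le> a\<close> by (simp add: mult_nonneg_nonpos)
    then show ?thesis
      unfolding square using \<open>0 \<le> int j * int j\<close> by linarith
  next
    case False
    have "(3 * a) * (3 * b) \<le> (4 * int j) * int j"
      by (rule mult_mono) (use False \<open>3 * b \<le> int j\<close> \<open>3 * a \<le> 4 * int j\<close> in auto)
    then have "9 * (a * b) \<le> 4 * (int j * int j)"
      by (simp add: algebra_simps)
    then show ?thesis
      unfolding square using \<open>0 \<le> int j * int j\<close> by linarith
  qed
  then show ?thesis
    using descends_at_path_poly_iff[OF assms(1)] form by simp
qed

lemma descends_at_path_poly_Suc: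
  assumes "descends_at (path_poly k) j"
  shows "descends_at (path_poly k) (Suc j)"
proof (cases "k < 2 * Suc j")
  case False
  have "descent_form (int k) (int (Suc j)) =
          descent_form (int k) (int j) + 10 * int j + 3 - 5 * int k"
    by (simp add: descent_form_def power2_eq_square algebra_simps)
  then show ?thesis
    using assms False descends_at_path_poly_iff[of j k] descends_at_path_poly_iff[of "Suc j" k]
    by simp
qed (rule descends_at_path_poly_if_less)

lemma descends_at_path_poly_add2:
  assumes "descends_at (path_poly k) j"
  shows "descends_at (path_poly (k + 2)) (Suc j)"
proof (cases "k + 2 < 2 * Suc j")
  case False
  have "descent_form (int (k + 2)) (int (Suc j)) = descent_form (int k) (int j) - int k - 3"
    by (simp add: descent_form_def power2_eq_square algebra_simps)
  then show ?thesis
    using assms False descends_at_path_poly_iff[of j k] descends_at_path_poly_iff[of "Suc j" "k + 2"]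
    by simp
qed (rule descends_at_path_poly_if_less)

lemma descends_at_path_poly_sub2:
  assumes "descends_at (path_poly (k + 2)) j"
  shows "descends_at (path_poly k) j"
proof -
  consider "k < 2 * j" | "2 * j \<le> k" "3 * k \<le> 10 * j" | "2 * j \<le> k" "10 * j < 3 * k"
    by linarith
  then show ?thesis
  proof cases
    case 3
    have "descent_form (int k) (int j) =
            descent_form (int (k + 2)) (int j) - 4 * int k - 4 + 10 * int j"
      by (simp add: descent_form_def power2_eq_square algebra_simps)
    then show ?thesis
      using assms 3 descends_at_path_poly_iff[of j k] descends_at_path_poly_iff[of j "k + 2"]
      by simp
  qed (simp_all add: descends_at_path_poly_if_less descends_at_path_poly_middle)
qed

lemma descends_at_path_poly_sub4:
  assumes "descends_at (path_poly (k + 4)) (Suc j)"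
  shows "descends_at (path_poly k) j"
proof -
  consider "k < 2 * j" | "2 * j \<le> k" "3 * k \<le> 10 * j" | "2 * j \<le> k" "10 * j < 3 * k"
    by linarith
  then show ?thesis
  proof cases
    case 3
    have "descent_form (int k) (int j) =
            descent_form (int (k + 4)) (int (Suc j)) - 3 * int k + 10 * int j + 1"
      by (simp add: descent_form_def power2_eq_square algebra_simps)
    then show ?thesis
      using assms 3 descends_at_path_poly_iff[of j k] descends_at_path_poly_iff[of "Suc j" "k + 4"]
      by simp
  qed (simp_all add: descends_at_path_poly_if_less descends_at_path_poly_middle)
qed

lemma mode_path_poly_le_iff: "mode (path_poly k) \<le> j \<longleftrightarrow> descends_at (path_poly k) j"
  using descends_at_iff_mode_le[of "path_poly k" j] descends_at_path_poly_Suc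
  by (simp add: coeff_path_poly)

lemma descends_at_mode_path_poly: "descends_at (path_poly k) (mode (path_poly k))"
  by (simp flip: mode_path_poly_le_iff)

lemma mode_path_poly_add2:
  "mode (path_poly k) \<le> mode (path_poly (k + 2)) \<and> mode (path_poly (k + 2)) \<le> mode (path_poly k) + 1"
  using descends_at_path_poly_sub2[OF descends_at_mode_path_poly]
    descends_at_path_poly_add2[OF descends_at_mode_path_poly]
  by (simp add: mode_path_poly_le_iff)

lemma mode_path_poly_add4: "mode (path_poly k) + 1 \<le> mode (path_poly (k + 4))"
proof -
  have "\<not> descends_at (path_poly (k + 4)) 0"
    by (simp add: descends_at_def coeff_path_poly)
  then obtain j where j: "mode (path_poly (k + 4)) = Suc j"
    by (metis mode_path_poly_le_iff le_refl not0_implies_Suc)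
  then have "descends_at (path_poly k) j"
    using descends_at_path_poly_sub4 descends_at_mode_path_poly by metis
  then show ?thesis
    using j by (simp add: mode_path_poly_le_iff)
qed

lemma coeff_path_poly_rising:
  "j < mode (path_poly k) \<Longrightarrow> coeff (path_poly k) j < coeff (path_poly k) (Suc j)"
  using mode_path_poly_le_iff[of k j] by (simp add: descends_at_def)

section \<open>The tadpole T_{5,n}\<close>

abbreviation tadpole_poly :: "nat \<Rightarrow> nat \<Rightarrow> nat poly" where
  "tadpole_poly m n \<equiv> indep_poly (tadpole_V m n) (tadpole_E m n)"

lemma tadpole_arc_cong:
  assumes "n \<le> n'" "y \<in> tadpole_V m n"
  shows "tadpole_arc m n' x y = tadpole_arc m n x y"
  using assms by (cases x; cases y) (auto simp: tadpole_V_def)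

lemma tadpole_E_cong:
  assumes "n \<le> n'" "x \<in> tadpole_V m n" "y \<in> tadpole_V m n"
  shows "tadpole_E m n' x y = tadpole_E m n x y"
  using assms by (simp add: tadpole_E_def tadpole_arc_cong)

lemma tadpole_poly_Suc_Suc:
  "tadpole_poly m (Suc (Suc n)) = tadpole_poly m (Suc n) + [:0, 1:] * tadpole_poly m n"
proof -
  let ?V = "tadpole_V m (Suc (Suc n))" and ?E = "tadpole_E m (Suc (Suc n))"
  let ?v = "Inr (Suc (Suc n)) :: nat + nat"
  let ?N = "{u. ?E ?v u \<or> ?E u ?v}"
  have "tadpole_poly m (Suc (Suc n)) =
          indep_poly (?V - {?v}) ?E + [:0, 1:] * indep_poly (?V - {?v} - ?N) ?E"
    by (rule indep_poly_delete) (auto simp: tadpole_V_def tadpole_E_def)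
  moreover have "?V - {?v} = tadpole_V m (Suc n)"
    by (auto simp: tadpole_V_def)
  moreover have "?V - {?v} - ?N = tadpole_V m n"
  proof (intro equalityI subsetI)
    show "x \<in> tadpole_V m n" if "x \<in> ?V - {?v} - ?N" for x
      using that by (cases x) (auto simp: tadpole_V_def tadpole_E_def)
    show "x \<in> ?V - {?v} - ?N" if "x \<in> tadpole_V m n" for x
      using that by (cases x) (auto simp: tadpole_V_def tadpole_E_def)
  qed
  moreover have "indep_poly (tadpole_V m (Suc n)) ?E = tadpole_poly m (Suc n)"
    by (rule indep_poly_cong) (rule tadpole_E_cong, auto)
  moreover have "indep_poly (tadpole_V m n) ?E = tadpole_poly m n"
    by (rule indep_poly_cong) (rule tadpole_E_cong, auto)
  ultimately show ?thesis by simp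
qed

lemma tadpole_poly_5_0: "tadpole_poly 5 0 = [:1, 5, 5:]"
proof -
  have "tadpole_V 5 0 = set [Inl 1, Inl 2, Inl 3, Inl 4, Inl 5]"
    by (auto simp: tadpole_V_def)
  then show ?thesis
    by (simp only:) (rule indep_poly_set_list_eqI; code_simp)
qed

lemma tadpole_poly_5_1: "tadpole_poly 5 1 = [:1, 6, 9, 3:]"
proof -
  have "tadpole_V 5 1 = set [Inl 1, Inl 2, Inl 3, Inl 4, Inl 5, Inr 1]"
    by (auto simp: tadpole_V_def)
  then show ?thesis
    by (simp only:) (rule indep_poly_set_list_eqI; code_simp)
qed

lemma path_poly_4: "path_poly 4 = [:1, 4, 3:]"
proof -
  have "path_V 4 = set [1, 2, 3, 4]"
    by (auto simp: path_V_def)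
  then show ?thesis
    by (simp only:) (rule indep_poly_set_list_eqI; code_simp)
qed

lemma path_poly_5: "path_poly 5 = [:1, 5, 6, 1:]"
proof -
  have "path_V 5 = set [1, 2, 3, 4, 5]"
    by (auto simp: path_V_def)
  then show ?thesis
    by (simp only:) (rule indep_poly_set_list_eqI; code_simp)
qed

lemma tadpole_poly_5_eq: "tadpole_poly 5 n = path_poly (n + 4) + [:0, 1, 2:] * path_poly n"
proof (induction n rule: induct_nat_012)
  case 0
  then show ?case
    by (simp add: tadpole_poly_5_0 path_poly_4 path_poly_0)
next
  case 1
  have "path_poly 1 = [:1, 1:]"
    using path_poly_Suc[of 0] by (simp add: path_poly_0 one_pCons)
  then have "tadpole_poly 5 1 = path_poly 5 + [:0, 1, 2:] * path_poly 1"
    unfolding tadpole_poly_5_1 path_poly_5 by simp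
  then show ?case
    by simp
next
  case (ge2 n)
  define x q where "x = [:0, 1 :: nat:]" and "q = [:0, 1, 2 :: nat:]"
  have "Suc (Suc n) + 4 = Suc (Suc n + 4)" "Suc n + 4 - 1 = n + 4"
    by simp_all
  then have path: "path_poly (Suc (Suc n) + 4) = path_poly (Suc n + 4) + x * path_poly (n + 4)"
    "path_poly (Suc (Suc n)) = path_poly (Suc n) + x * path_poly n"
    unfolding x_def by (simp_all only: path_poly_Suc diff_Suc_1)
  have "tadpole_poly 5 (Suc (Suc n)) = tadpole_poly 5 (Suc n) + x * tadpole_poly 5 n"
    unfolding x_def by (rule tadpole_poly_Suc_Suc)
  also have "\<dots> = path_poly (Suc (Suc n) + 4) + q * path_poly (Suc (Suc n))"
    using ge2 unfolding path q_def[symmetric] by (simp add: algebra_simps)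
  finally show ?case
    by (simp only: q_def)
qed

lemma coeff_tadpole_poly_5_rising:
  assumes "j \<le> mode (path_poly n)"
  shows "coeff (tadpole_poly 5 n) j < coeff (tadpole_poly 5 n) (Suc j)"
proof -
  have long: "coeff (path_poly (n + 4)) j < coeff (path_poly (n + 4)) (Suc j)"
    using mode_path_poly_add4[of n] assms by (intro coeff_path_poly_rising) simp
  have short: "coeff (path_poly n) i \<le> coeff (path_poly n) (Suc i)" if "i < j" for i
    using coeff_path_poly_rising[of i n] that assms by simp
  consider "j = 0" | "j = 1" | i where "j = Suc (Suc i)"
    by (metis One_nat_def not0_implies_Suc)
  then show ?thesis
  proof cases
    case 3
    then show ?thesis
      using long short[of i] short[of "Suc i"] by (simp add: tadpole_poly_5_eq)
  qed (use long short[of 0] in \<open>simp_all add: tadpole_poly_5_eq\<close>)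
qed

lemma descends_at_tadpole_poly_5:
  assumes "mode (path_poly n) + 2 \<le> j"
  shows "descends_at (tadpole_poly 5 n) j"
proof -
  define i where "i = j - 2"
  have j: "j = Suc (Suc i)" and "mode (path_poly n) \<le> i"
    using assms by (simp_all add: i_def)
  have "mode (path_poly (n + 4)) \<le> j"
    using mode_path_poly_add2[of n] mode_path_poly_add2[of "n + 2"] assms
    by (simp add: eval_nat_numeral)
  then have "descends_at (path_poly (n + 4)) j"
    by (simp add: mode_path_poly_le_iff)
  moreover have "descends_at (path_poly n) i" "descends_at (path_poly n) (Suc i)"
    using \<open>mode (path_poly n) \<le> i\<close> by (simp_all add: mode_path_poly_le_iff[symmetric])
  ultimately show ?thesis
    unfolding descends_at_def j by (simp add: tadpole_poly_5_eq)
qed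

theorem proposition3p5:
  fixes n :: nat
  assumes "n \<ge> 5"
  shows "unimodal (indep_poly (tadpole_V 5 n) (tadpole_E 5 n)) \<and>
         mode (indep_poly (tadpole_V 5 n) (tadpole_E 5 n))
           \<in> {mode (indep_poly (path_V (n + 2)) path_E),
              mode (indep_poly (path_V (n + 2)) path_E) + 1,
              mode (indep_poly (path_V (n + 2)) path_E) + 2}"
proof -
  have "unimodal (tadpole_poly 5 n) \<and>
        mode (tadpole_poly 5 n) \<in> {mode (path_poly n) + 1, mode (path_poly n) + 2}"
    using coeff_tadpole_poly_5_rising descends_at_tadpole_poly_5 by (rule unimodal_mode_within_gap)
  moreover have "mode (path_poly n) \<le> mode (path_poly (n + 2))"
    and "mode (path_poly (n + 2)) \<le> mode (path_poly n) + 1"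
    using mode_path_poly_add2 by auto
  ultimately show ?thesis
    by auto
qed

end
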